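(* Consider the following finite dynamic game. There is a finite set of players $\mathcal{I}$ and times $t\in\{1,\dots,T\}$. Each player $i$ has a local state $X_t^i$ (in a finite set $\mathcal{X}_t^i$), $X_t=(X_t^i)_i$, and a local noise process $W_t^i$; players have no initial information. At each time every player $i$ chooses $U_t^i$ (finite set), $U_t=(U_t^i)_i$, and $(X_{t+1}^i,Y_t^i)=f_t^i(X_t^i,U_t,W_t^i)$ for fixed functions $f_t^i$, where $Y_t^i$ is a public observation (finite set), $Y_t=(Y_t^i)_i$. Player $i$'s information at time $t$ is $H_t^i=(Y_{1:t-1},U_{1:t-1},X_{1:t}^i)$, and all of $(X_1^i)_{i}$, $(W_t^i)_{i,t}$ are mutually independent. Then for each player $i$ and time $t$ there exist functions $\xi_t^{g^i}$, depending on the strategy profile only through $g^i$, mapping $(y_{1:t-1},u_{1:t-1})$ to a distribution on $\mathcal{X}_1^i\times\cdots\times\mathcal{X}_t^i$, such that $$\Pr^g(x_{1:t}\mid y_{1:t-1},u_{1:t-1})=\prod_{i\in\mathcal{I}}\xi_t^{g^i}(x_{1:t}^i\mid y_{1:t-1},u_{1:t-1})$$ for all behavioral strategy profiles $g$ and all $(y_{1:t-1},u_{1:t-1})$ with positive probability under $g$.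
   Context: A behavioral strategy $g^i=(g_t^i)_t$ of player $i$ maps each realization of $H_t^i$ to a probability distribution over player $i$'s actions at time $t$; $\Pr^g$ denotes probability under the profile $g=(g^i)_{i\in\mathcal{I}}$. *)

theory Defs
  imports "HOL-Probability.Probability"
begin

(* Times are 0-based: index n stands for time t = n+1.
   A player's information H_t^i = (y_{1:t-1}, u_{1:t-1}, x^i_{1:t}) is a triple of lists. *)

type_synonym ('i,'x,'y,'u) hist = "('i \<Rightarrow> 'y) list \<times> ('i \<Rightarrow> 'u) list \<times> 'x list"

type_synonym ('i,'x,'y,'u) profile = "'i \<Rightarrow> nat \<Rightarrow> ('i,'x,'y,'u) hist \<Rightarrow> 'u pmf"

(* a trajectory prefix (x_{1:t}, y_{1:t-1}, u_{1:t-1}) *)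
type_synonym ('i,'x,'y,'u) traj = "('i \<Rightarrow> 'x) list \<times> ('i \<Rightarrow> 'y) list \<times> ('i \<Rightarrow> 'u) list"

definition game_step ::
  "('i::finite \<Rightarrow> nat \<Rightarrow> 'x \<Rightarrow> ('i \<Rightarrow> 'u) \<Rightarrow> 'w \<Rightarrow> 'x \<times> 'y)
   \<Rightarrow> ('i \<Rightarrow> nat \<Rightarrow> 'w pmf) \<Rightarrow> ('i,'x,'y,'u) profile \<Rightarrow> nat
   \<Rightarrow> ('i,'x,'y,'u) traj \<Rightarrow> ('i,'x,'y,'u) traj pmf" where
  "game_step f W g n tr =
     (case tr of (xs, ys, us) \<Rightarrow>
       do { u \<leftarrow> Pi_pmf UNIV undefined (\<lambda>i. g i n (ys, us, map (\<lambda>x. x i) xs));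
            w \<leftarrow> Pi_pmf UNIV undefined (\<lambda>i. W i n);
            return_pmf (xs @ [\<lambda>i. fst (f i n (last xs i) u (w i))],
                        ys @ [\<lambda>i. snd (f i n (last xs i) u (w i))],
                        us @ [u]) })"

primrec game_traj ::
  "('i::finite \<Rightarrow> 'x pmf)
   \<Rightarrow> ('i \<Rightarrow> nat \<Rightarrow> 'x \<Rightarrow> ('i \<Rightarrow> 'u) \<Rightarrow> 'w \<Rightarrow> 'x \<times> 'y)
   \<Rightarrow> ('i \<Rightarrow> nat \<Rightarrow> 'w pmf) \<Rightarrow> ('i,'x,'y,'u) profile \<Rightarrow> nat
   \<Rightarrow> ('i,'x,'y,'u) traj pmf" where
  "game_traj P0 f W g 0 = map_pmf (\<lambda>x. ([x], [], [])) (Pi_pmf UNIV undefined P0)"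
| "game_traj P0 f W g (Suc n) = bind_pmf (game_traj P0 f W g n) (game_step f W g n)"

definition prob_yu where
  "prob_yu P0 f W g n ys us =
     measure_pmf.prob (game_traj P0 f W g n) {tr. fst (snd tr) = ys \<and> snd (snd tr) = us}"

definition cond_prob_x where
  "cond_prob_x P0 f W g n xs ys us =
     pmf (game_traj P0 f W g n) (xs, ys, us) / prob_yu P0 f W g n ys us"

definition behavioral_profile where
  "behavioral_profile Us g \<longleftrightarrow> (\<forall>i n h. set_pmf (g i n h) \<subseteq> Us i n)"

end

theory Submission
  imports Defs
begin

text \<open>By induction on time, the probability of a trajectory prefix (x_{1:t}, y_{1:t-1}, u_{1:t-1})
  is a product over the players of weights in which player i contributes only its initial
  distribution, its own strategy g^i evaluated on its own information, and the probability that its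
  own noise produces its next local state and public observation. The players' local state paths
  range over a product of finite sets, so summing over them shows that Pr^g(y_{1:t-1}, u_{1:t-1}) is
  the product of the players' total weights; normalising each player's weight by its total gives
  xi_t^{g^i}.\<close>

lemma pmf_bind_eq_single:
  assumes "\<And>b. b \<in> set_pmf p \<Longrightarrow> b \<noteq> a \<Longrightarrow> pmf (K b) x = 0"
  shows "pmf (bind_pmf p K) x = pmf p a * pmf (K a) x"
proof -
  have "pmf (bind_pmf p K) x = (\<integral>b. pmf (K b) x \<partial>measure_pmf p)" by (rule pmf_bind)
  also have "\<dots> = (\<Sum>b\<in>{a}. pmf p b *\<^sub>R pmf (K b) x)"
    by (rule integral_measure_pmf) (use assms in auto)
  finally show ?thesis by simp
qed

lemma measure_pmf_snd_eq_sum: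
  assumes "finite A" and "\<And>a. (a, b) \<in> set_pmf p \<Longrightarrow> a \<in> A"
  shows "measure_pmf.prob p {z. snd z = b} = (\<Sum>a\<in>A. pmf p (a, b))"
proof -
  have "{z. snd z = b} \<inter> set_pmf p = (\<lambda>a. (a, b)) ` A \<inter> set_pmf p"
    using assms(2) by force
  then have "measure_pmf.prob p {z. snd z = b} = measure_pmf.prob p ((\<lambda>a. (a, b)) ` A)"
    by (metis measure_Int_set_pmf)
  also have "\<dots> = (\<Sum>a\<in>A. pmf p (a, b))"
    using assms(1) by (simp add: measure_measure_pmf_finite sum.reindex inj_on_def)
  finally show ?thesis .
qed

text \<open>Unless the weights on A are nonnegative with positive sum, \<open>embed_pmf\<close> returns an
  unspecified distribution.\<close>

definition pmf_of_weights :: "'a set \<Rightarrow> ('a \<Rightarrow> real) \<Rightarrow> 'a pmf" where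
  "pmf_of_weights A w = embed_pmf (\<lambda>x. if x \<in> A then w x / (\<Sum>y\<in>A. w y) else 0)"

lemma pmf_pmf_of_weights:
  assumes "finite A" and nonneg: "\<And>x. x \<in> A \<Longrightarrow> 0 \<le> w x" and pos: "0 < (\<Sum>x\<in>A. w x)"
  shows "pmf (pmf_of_weights A w) x = (if x \<in> A then w x / (\<Sum>y\<in>A. w y) else 0)"
  unfolding pmf_of_weights_def
proof (rule pmf_embed_pmf)
  let ?d = "\<lambda>x. if x \<in> A then w x / (\<Sum>y\<in>A. w y) else 0"
  show "0 \<le> ?d x" for x using nonneg pos by simp
  have "(\<integral>\<^sup>+x. ennreal (?d x) \<partial>count_space UNIV) = (\<Sum>x\<in>A. ennreal (?d x))"
    by (rule nn_integral_count_space') (use \<open>finite A\<close> in auto)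
  also have "\<dots> = ennreal (\<Sum>x\<in>A. w x / (\<Sum>y\<in>A. w y))"
    using nonneg pos by (subst sum_ennreal) auto
  also have "(\<Sum>x\<in>A. w x / (\<Sum>y\<in>A. w y)) = 1"
    using pos by (simp add: sum_divide_distrib[symmetric])
  finally show "(\<integral>\<^sup>+x. ennreal (?d x) \<partial>count_space UNIV) = 1" by simp
qed

lemma bij_betw_transpose_lists:
  assumes "\<And>i. S i \<subseteq> {l. length l = m}"
  shows "bij_betw (\<lambda>xs i. map (\<lambda>x. x i) xs)
           {xs. length xs = m \<and> (\<forall>i. map (\<lambda>x. x i) xs \<in> S i)} (PiE UNIV S)"
proof (rule bij_betw_byWitness[where f' = "\<lambda>L. map (\<lambda>k i. L i ! k) [0..<m]"])
  have "map (\<lambda>x. x i) (map (\<lambda>k i. L i ! k) [0..<m]) = L i" if "L \<in> PiE UNIV S" for L i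
  proof -
    have "length (L i) = m" using that assms[of i] by (auto simp: PiE_UNIV_domain)
    then show ?thesis by (intro nth_equalityI) auto
  qed
  then show "\<forall>L\<in>PiE UNIV S. (\<lambda>i. map (\<lambda>x. x i) (map (\<lambda>k i. L i ! k) [0..<m])) = L"
    and "(\<lambda>L. map (\<lambda>k i. L i ! k) [0..<m]) ` PiE UNIV S
           \<subseteq> {xs. length xs = m \<and> (\<forall>i. map (\<lambda>x. x i) xs \<in> S i)}"
    by (auto simp: PiE_UNIV_domain Pi_iff)
qed (auto intro: nth_equalityI simp: PiE_UNIV_domain)

lemma sum_prod_transpose_lists:
  fixes F :: "'i::finite \<Rightarrow> 'a list \<Rightarrow> 'b::comm_semiring_1"
  assumes "\<And>i. finite (S i)" and "\<And>i. S i \<subseteq> {l. length l = m}"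
  shows "(\<Sum>xs | length xs = m \<and> (\<forall>i. map (\<lambda>x. x i) xs \<in> S i).
            \<Prod>i\<in>UNIV. F i (map (\<lambda>x. x i) xs))
         = (\<Prod>i\<in>UNIV. \<Sum>l\<in>S i. F i l)"
  using sum.reindex_bij_betw[OF bij_betw_transpose_lists[OF assms(2)]]
    prod_sum_PiE[of UNIV S F] assms(1) by simp

lemma set_game_step:
  assumes "tr' \<in> set_pmf (game_step f W g n (xs, ys, us))"
  shows "\<exists>u w. tr' = (xs @ [\<lambda>i. fst (f i n (last xs i) u (w i))],
                     ys @ [\<lambda>i. snd (f i n (last xs i) u (w i))], us @ [u])
          \<and> (\<forall>i. u i \<in> set_pmf (g i n (ys, us, map (\<lambda>x. x i) xs)))"
  using assms by (auto simp: game_step_def set_Pi_pmf PiE_dflt_def)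

lemma length_game_traj:
  assumes "(xs, ys, us) \<in> set_pmf (game_traj P0 f W g n)"
  shows "length xs = Suc n \<and> length ys = n \<and> length us = n"
  using assms
proof (induction n arbitrary: xs ys us)
  case (Suc n)
  then obtain xs0 ys0 us0 where "(xs0, ys0, us0) \<in> set_pmf (game_traj P0 f W g n)"
    and "(xs, ys, us) \<in> set_pmf (game_step f W g n (xs0, ys0, us0))" by auto
  with Suc.IH show ?case by (auto dest!: set_game_step)
qed auto

lemma pmf_game_step:
  fixes g :: "('i::finite,'x,'y,'u) profile"
  shows "pmf (game_step f W g n (xs, ys, us)) (xs @ [x'], ys @ [y'], us @ [u']) =
    (\<Prod>i\<in>UNIV. pmf (g i n (ys, us, map (\<lambda>x. x i) xs)) (u' i)) *
    (\<Prod>i\<in>UNIV. pmf (map_pmf (f i n (last xs i) u') (W i n)) (x' i, y' i))"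
proof -
  define U where "U = Pi_pmf UNIV undefined (\<lambda>i. g i n (ys, us, map (\<lambda>x. x i) xs))"
  define V where "V = Pi_pmf UNIV undefined (\<lambda>i. W i n)"
  define H where "H u w = (xs @ [\<lambda>i. fst (f i n (last xs i) u (w i))],
                        ys @ [\<lambda>i. snd (f i n (last xs i) u (w i))], us @ [u])" for u w
  have "game_step f W g n (xs, ys, us) = bind_pmf U (\<lambda>u. map_pmf (H u) V)"
    unfolding game_step_def U_def V_def H_def map_pmf_def by simp
  moreover have "pmf (bind_pmf U (\<lambda>u. map_pmf (H u) V)) (xs @ [x'], ys @ [y'], us @ [u']) =
        pmf U u' * pmf (map_pmf (H u') V) (xs @ [x'], ys @ [y'], us @ [u'])"
    by (rule pmf_bind_eq_single) (auto simp: H_def pmf_eq_0_set_pmf)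
  moreover have "pmf U u' = (\<Prod>i\<in>UNIV. pmf (g i n (ys, us, map (\<lambda>x. x i) xs)) (u' i))"
    unfolding U_def by (rule pmf_Pi') auto
  moreover have "H u' -` {(xs @ [x'], ys @ [y'], us @ [u'])} =
      Pi UNIV (\<lambda>i. {w. f i n (last xs i) u' w = (x' i, y' i)})"
    by (auto simp: H_def fun_eq_iff prod_eq_iff Pi_iff)
  then have "pmf (map_pmf (H u') V) (xs @ [x'], ys @ [y'], us @ [u']) =
      (\<Prod>i\<in>UNIV. pmf (map_pmf (f i n (last xs i) u') (W i n)) (x' i, y' i))"
    unfolding V_def by (simp add: pmf_map measure_Pi_pmf_Pi vimage_def)
  ultimately show ?thesis by simp
qed

definition player_weight ::
  "('i \<Rightarrow> 'x pmf) \<Rightarrow> ('i \<Rightarrow> nat \<Rightarrow> 'x \<Rightarrow> ('i \<Rightarrow> 'u) \<Rightarrow> 'w \<Rightarrow> 'x \<times> 'y)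
   \<Rightarrow> ('i \<Rightarrow> nat \<Rightarrow> 'w pmf) \<Rightarrow> 'i \<Rightarrow> (nat \<Rightarrow> ('i,'x,'y,'u) hist \<Rightarrow> 'u pmf) \<Rightarrow> nat
   \<Rightarrow> ('i \<Rightarrow> 'y) list \<Rightarrow> ('i \<Rightarrow> 'u) list \<Rightarrow> 'x list \<Rightarrow> real" where
  "player_weight P0 f W i gi n ys us l =
     (if length ys = n \<and> length us = n \<and> length l = Suc n then
        pmf (P0 i) (l ! 0) *
        (\<Prod>k<n. pmf (gi k (take k ys, take k us, take (Suc k) l)) ((us ! k) i) *
               pmf (map_pmf (f i k (l ! k) (us ! k)) (W i k)) (l ! Suc k, (ys ! k) i))
      else 0)"

lemma player_weight_nonneg: "0 \<le> player_weight P0 f W i gi n ys us l"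
  by (simp add: player_weight_def prod_nonneg)

lemma player_weight_snoc:
  assumes "length ys = n" and "length us = n" and "length l = Suc n"
  shows "player_weight P0 f W i gi (Suc n) (ys @ [y]) (us @ [u]) (l @ [x]) =
    player_weight P0 f W i gi n ys us l * pmf (gi n (ys, us, l)) (u i) *
    pmf (map_pmf (f i n (last l) u) (W i n)) (x, y i)"
proof -
  have "(\<Prod>k<n. pmf (gi k (take k (ys @ [y]), take k (us @ [u]), take (Suc k) (l @ [x])))
                  (((us @ [u]) ! k) i) *
                pmf (map_pmf (f i k ((l @ [x]) ! k) ((us @ [u]) ! k)) (W i k))
                  ((l @ [x]) ! Suc k, ((ys @ [y]) ! k) i)) =
        (\<Prod>k<n. pmf (gi k (take k ys, take k us, take (Suc k) l)) ((us ! k) i) *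
               pmf (map_pmf (f i k (l ! k) (us ! k)) (W i k)) (l ! Suc k, (ys ! k) i))"
    using assms by (intro prod.cong) (auto simp: nth_append)
  moreover have "last l = l ! n" using assms(3) last_conv_nth[of l] by force
  ultimately show ?thesis
    using assms by (simp add: player_weight_def nth_append mult_ac)
qed

lemma pmf_game_traj:
  fixes g :: "('i::finite,'x,'y,'u) profile"
  shows "pmf (game_traj P0 f W g n) (xs, ys, us) =
         (\<Prod>i\<in>UNIV. player_weight P0 f W i (g i) n ys us (map (\<lambda>x. x i) xs))"
proof (cases "length xs = Suc n \<and> length ys = n \<and> length us = n")
  case False
  then have "(xs, ys, us) \<notin> set_pmf (game_traj P0 f W g n)" using length_game_traj by blast
  moreover have "(\<Prod>i\<in>UNIV. player_weight P0 f W i (g i) n ys us (map (\<lambda>x. x i) xs)) = 0"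
    using False by (intro prod_zero) (auto simp: player_weight_def)
  ultimately show ?thesis by (simp add: set_pmf_iff)
next
  case True
  then show ?thesis
  proof (induction n arbitrary: xs ys us)
    case 0
    then obtain x where [simp]: "xs = [x]" "ys = []" "us = []" by (auto simp: length_Suc_conv)
    have "inj (\<lambda>x::'i \<Rightarrow> 'x. ([x], [] :: ('i \<Rightarrow> 'y) list, [] :: ('i \<Rightarrow> 'u) list))"
      by (auto intro: injI)
    then have "pmf (game_traj P0 f W g 0) (xs, ys, us) = pmf (Pi_pmf UNIV undefined P0) x"
      using pmf_map_inj' by simp
    also have "\<dots> = (\<Prod>i\<in>UNIV. pmf (P0 i) (x i))" by (rule pmf_Pi') auto
    finally show ?case by (simp add: player_weight_def)
  next
    case (Suc n)
    then obtain xs0 x ys0 y us0 u where snoc: "xs = xs0 @ [x]" "ys = ys0 @ [y]" "us = us0 @ [u]"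
      by (metis length_Suc_conv_rev)
    with Suc.prems have len: "length xs0 = Suc n" "length ys0 = n" "length us0 = n" by auto
    then have "xs0 \<noteq> []" by auto
    have "pmf (game_traj P0 f W g (Suc n)) (xs, ys, us) =
          pmf (game_traj P0 f W g n) (xs0, ys0, us0) *
          pmf (game_step f W g n (xs0, ys0, us0)) (xs, ys, us)"
      unfolding game_traj.simps snoc
      by (rule pmf_bind_eq_single) (auto simp: pmf_eq_0_set_pmf dest!: set_game_step)
    also have "\<dots> = (\<Prod>i\<in>UNIV. player_weight P0 f W i (g i) n ys0 us0 (map (\<lambda>x. x i) xs0) *
        pmf (g i n (ys0, us0, map (\<lambda>x. x i) xs0)) (u i) *
        pmf (map_pmf (f i n (last xs0 i) u) (W i n)) (x i, y i))"
      by (simp add: Suc.IH len snoc pmf_game_step prod.distrib mult_ac)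
    also have "\<dots> = (\<Prod>i\<in>UNIV. player_weight P0 f W i (g i) (Suc n) ys us (map (\<lambda>x. x i) xs))"
      using len \<open>xs0 \<noteq> []\<close> by (simp add: snoc player_weight_snoc last_map)
    finally show ?case .
  qed
qed

definition state_paths :: "('i \<Rightarrow> nat \<Rightarrow> 'x set) \<Rightarrow> 'i \<Rightarrow> nat \<Rightarrow> 'x list set" where
  "state_paths Xs i n = {l. length l = Suc n \<and> (\<forall>k\<le>n. l ! k \<in> Xs i k)}"

lemma finite_state_paths:
  assumes "\<And>k. finite (Xs i k)"
  shows "finite (state_paths Xs i n)"
proof (rule finite_subset)
  show "state_paths Xs i n \<subseteq> {l. set l \<subseteq> (\<Union>k\<le>n. Xs i k) \<and> length l = Suc n}"
    by (fastforce simp: state_paths_def in_set_conv_nth less_Suc_eq_le)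
  show "finite {l. set l \<subseteq> (\<Union>k\<le>n. Xs i k) \<and> length l = Suc n}"
    using assms by (intro finite_lists_length_eq) auto
qed

lemma snoc_in_state_paths:
  "l \<in> state_paths Xs i n \<Longrightarrow> x \<in> Xs i (Suc n) \<Longrightarrow> l @ [x] \<in> state_paths Xs i (Suc n)"
  by (auto simp: state_paths_def nth_append le_Suc_eq)

lemma last_in_state_paths: "l \<in> state_paths Xs i n \<Longrightarrow> last l \<in> Xs i n"
  using last_conv_nth[of l] by (force simp: state_paths_def)

definition private_belief ::
  "('i \<Rightarrow> 'x pmf) \<Rightarrow> ('i \<Rightarrow> nat \<Rightarrow> 'x \<Rightarrow> ('i \<Rightarrow> 'u) \<Rightarrow> 'w \<Rightarrow> 'x \<times> 'y)
   \<Rightarrow> ('i \<Rightarrow> nat \<Rightarrow> 'w pmf) \<Rightarrow> ('i \<Rightarrow> nat \<Rightarrow> 'x set) \<Rightarrow> 'i \<Rightarrow> nat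
   \<Rightarrow> (nat \<Rightarrow> ('i,'x,'y,'u) hist \<Rightarrow> 'u pmf) \<Rightarrow> ('i \<Rightarrow> 'y) list \<Rightarrow> ('i \<Rightarrow> 'u) list \<Rightarrow> 'x list pmf"
  where
  "private_belief P0 f W Xs i n gi ys us =
     pmf_of_weights (state_paths Xs i n) (player_weight P0 f W i gi n ys us)"

context
  fixes P0 :: "'i::finite \<Rightarrow> 'x pmf"
    and f :: "'i \<Rightarrow> nat \<Rightarrow> 'x \<Rightarrow> ('i \<Rightarrow> 'u) \<Rightarrow> 'w \<Rightarrow> 'x \<times> 'y"
    and Xs :: "'i \<Rightarrow> nat \<Rightarrow> 'x set"
    and Us :: "'i \<Rightarrow> nat \<Rightarrow> 'u set"
    and Ys :: "'i \<Rightarrow> nat \<Rightarrow> 'y set"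
  assumes init: "\<And>i. set_pmf (P0 i) \<subseteq> Xs i 0"
    and dyn: "\<And>i n x u w. x \<in> Xs i n \<Longrightarrow> (\<forall>j. u j \<in> Us j n) \<Longrightarrow>
                f i n x u w \<in> Xs i (Suc n) \<times> Ys i n"
begin

lemma game_traj_in_state_paths:
  assumes "behavioral_profile Us g" and "(xs, ys, us) \<in> set_pmf (game_traj P0 f W g n)"
  shows "map (\<lambda>x. x i) xs \<in> state_paths Xs i n"
  using assms(2)
proof (induction n arbitrary: xs ys us i)
  case 0
  then show ?case using init by (fastforce simp: state_paths_def set_Pi_pmf PiE_dflt_def)
next
  case (Suc n)
  then obtain xs0 ys0 us0 where prev: "(xs0, ys0, us0) \<in> set_pmf (game_traj P0 f W g n)"
    and "(xs, ys, us) \<in> set_pmf (game_step f W g n (xs0, ys0, us0))" by auto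
  then obtain u w where xs: "xs = xs0 @ [\<lambda>i. fst (f i n (last xs0 i) u (w i))]"
    and u: "\<forall>j. u j \<in> set_pmf (g j n (ys0, us0, map (\<lambda>x. x j) xs0))"
    by (auto dest!: set_game_step)
  have "\<forall>j. u j \<in> Us j n" using u assms(1) unfolding behavioral_profile_def by blast
  moreover have "xs0 \<noteq> []" using length_game_traj[OF prev] by auto
  then have "last xs0 i \<in> Xs i n"
    using last_in_state_paths[OF Suc.IH[OF prev, of i]] by (simp add: last_map)
  ultimately have "fst (f i n (last xs0 i) u (w i)) \<in> Xs i (Suc n)"
    using dyn by (auto simp: mem_Times_iff)
  with Suc.IH[OF prev] show ?case by (simp add: xs snoc_in_state_paths)
qed

context
  assumes finX: "\<And>i n. finite (Xs i n)"
begin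

lemma prob_yu_eq_prod_sum_player_weight:
  assumes "behavioral_profile Us g"
  shows "prob_yu P0 f W g n ys us =
         (\<Prod>i\<in>UNIV. \<Sum>l\<in>state_paths Xs i n. player_weight P0 f W i (g i) n ys us l)"
proof -
  let ?A = "{xs. length xs = Suc n \<and> (\<forall>i. map (\<lambda>x. x i) xs \<in> state_paths Xs i n)}"
  have lengths: "\<And>i. state_paths Xs i n \<subseteq> {l. length l = Suc n}"
    by (auto simp: state_paths_def)
  have "finite ?A"
    using bij_betw_finite[OF bij_betw_transpose_lists[where S = "\<lambda>i. state_paths Xs i n",
          OF lengths]]
    by (simp add: finX finite_state_paths finite_PiE)
  have "prob_yu P0 f W g n ys us = measure_pmf.prob (game_traj P0 f W g n) {tr. snd tr = (ys, us)}"
    by (simp add: prob_yu_def prod_eq_iff)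
  also have "\<dots> = (\<Sum>xs\<in>?A. pmf (game_traj P0 f W g n) (xs, ys, us))"
    using \<open>finite ?A\<close>
    by (intro measure_pmf_snd_eq_sum)
      (auto dest: length_game_traj game_traj_in_state_paths[OF assms])
  also have "\<dots> = (\<Prod>i\<in>UNIV. \<Sum>l\<in>state_paths Xs i n. player_weight P0 f W i (g i) n ys us l)"
    unfolding pmf_game_traj
    by (rule sum_prod_transpose_lists) (use finX lengths in \<open>auto intro: finite_state_paths\<close>)
  finally show ?thesis .
qed

context
  fixes W g n ys us
  assumes beh: "behavioral_profile Us g" and pos: "0 < prob_yu P0 f W g n ys us"
begin

lemma sum_player_weight_pos:
  "0 < (\<Sum>l\<in>state_paths Xs i n. player_weight P0 f W i (g i) n ys us l)"
proof (rule ccontr)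
  assume "\<not> ?thesis"
  moreover have "0 \<le> (\<Sum>l\<in>state_paths Xs i n. player_weight P0 f W i (g i) n ys us l)"
    by (intro sum_nonneg player_weight_nonneg)
  ultimately have "(\<Sum>l\<in>state_paths Xs i n. player_weight P0 f W i (g i) n ys us l) = 0"
    by linarith
  then have "prob_yu P0 f W g n ys us = 0"
    by (subst prob_yu_eq_prod_sum_player_weight[OF beh]) (auto intro: prod_zero)
  with pos show False by simp
qed

lemma pmf_private_belief:
  "pmf (private_belief P0 f W Xs i n (g i) ys us) l =
     (if l \<in> state_paths Xs i n
      then player_weight P0 f W i (g i) n ys us l /
           (\<Sum>l'\<in>state_paths Xs i n. player_weight P0 f W i (g i) n ys us l')
      else 0)"
  unfolding private_belief_def
  using finX sum_player_weight_pos
  by (intro pmf_pmf_of_weights) (auto intro: finite_state_paths player_weight_nonneg)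

lemma set_private_belief:
  "set_pmf (private_belief P0 f W Xs i n (g i) ys us) \<subseteq> state_paths Xs i n"
  by (auto simp: set_pmf_iff pmf_private_belief split: if_splits)

lemma cond_prob_x_eq_prod_private_belief:
  "cond_prob_x P0 f W g n xs ys us =
     (\<Prod>i\<in>UNIV. pmf (private_belief P0 f W Xs i n (g i) ys us) (map (\<lambda>x. x i) xs))"
proof (cases "\<forall>i. map (\<lambda>x. x i) xs \<in> state_paths Xs i n")
  case True
  then show ?thesis
    by (simp add: cond_prob_x_def pmf_game_traj prob_yu_eq_prod_sum_player_weight[OF beh]
        pmf_private_belief prod_dividef)
next
  case False
  then obtain j where "map (\<lambda>x. x j) xs \<notin> state_paths Xs j n" by blast
  then have "(xs, ys, us) \<notin> set_pmf (game_traj P0 f W g n)"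
    using game_traj_in_state_paths[OF beh] by blast
  moreover have "pmf (private_belief P0 f W Xs j n (g j) ys us) (map (\<lambda>x. x j) xs) = 0"
    using \<open>map (\<lambda>x. x j) xs \<notin> state_paths Xs j n\<close> by (simp add: pmf_private_belief)
  ultimately show ?thesis
    by (auto simp: cond_prob_x_def set_pmf_iff intro!: prod_zero[symmetric])
qed

end

end

end

theorem lemma12:
  fixes P0 :: "'i::finite \<Rightarrow> 'x pmf"
    and f :: "'i \<Rightarrow> nat \<Rightarrow> 'x \<Rightarrow> ('i \<Rightarrow> 'u) \<Rightarrow> 'w \<Rightarrow> 'x \<times> 'y"
    and W :: "'i \<Rightarrow> nat \<Rightarrow> 'w pmf"
    and Xs :: "'i \<Rightarrow> nat \<Rightarrow> 'x set"
    and Us :: "'i \<Rightarrow> nat \<Rightarrow> 'u set"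
    and Ys :: "'i \<Rightarrow> nat \<Rightarrow> 'y set"
    and T :: nat
  assumes finX: "\<And>i n. finite (Xs i n)"
    and finU: "\<And>i n. finite (Us i n)"
    and finY: "\<And>i n. finite (Ys i n)"
    and init: "\<And>i. set_pmf (P0 i) \<subseteq> Xs i 0"
    and dyn: "\<And>i n x u w. x \<in> Xs i n \<Longrightarrow> (\<forall>j. u j \<in> Us j n) \<Longrightarrow>
                f i n x u w \<in> Xs i (Suc n) \<times> Ys i n"
  shows "\<exists>\<xi> :: 'i \<Rightarrow> nat \<Rightarrow> (nat \<Rightarrow> ('i,'x,'y,'u) hist \<Rightarrow> 'u pmf)
                  \<Rightarrow> ('i \<Rightarrow> 'y) list \<Rightarrow> ('i \<Rightarrow> 'u) list \<Rightarrow> 'x list pmf.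
           \<forall>g. behavioral_profile Us g \<longrightarrow>
             (\<forall>n < T. \<forall>ys us. prob_yu P0 f W g n ys us > 0 \<longrightarrow>
                (\<forall>i. set_pmf (\<xi> i n (g i) ys us) \<subseteq>
                       {xs. length xs = Suc n \<and> (\<forall>k \<le> n. xs ! k \<in> Xs i k)}) \<and>
                (\<forall>xs. cond_prob_x P0 f W g n xs ys us =
                       (\<Prod>i\<in>UNIV. pmf (\<xi> i n (g i) ys us) (map (\<lambda>x. x i) xs))))"
proof (intro exI[of _ "private_belief P0 f W Xs"] allI impI conjI)
  fix g n ys us i xs
  assume beh: "behavioral_profile Us g" and pos: "prob_yu P0 f W g n ys us > 0"
  show "set_pmf (private_belief P0 f W Xs i n (g i) ys us) \<subseteq>
          {xs. length xs = Suc n \<and> (\<forall>k \<le> n. xs ! k \<in> Xs i k)}"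
    using set_private_belief[OF init dyn finX beh pos] by (simp add: state_paths_def)
  show "cond_prob_x P0 f W g n xs ys us =
          (\<Prod>i\<in>UNIV. pmf (private_belief P0 f W Xs i n (g i) ys us) (map (\<lambda>x. x i) xs))"
    by (rule cond_prob_x_eq_prod_private_belief[OF init dyn finX beh pos])
qed

end
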